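(* Let $X\subseteq U$ with $|X|=m$ be partitioned (deterministically) into $k$ groups $X_1,\dots,X_k$, and suppose there is $m_0\ge1$ with $|X_i|\le m_0$ for all $i$. Let $h:U\to[n]$ be a simple tabulation hash function. Let $C_i$ be the number of unordered pairs $\{x,y\}\subseteq X_i$ with $x\ne y$ and $h(x)=h(y)$, and $C=\sum_{i=1}^k C_i$. Then $$\mathbb{E}[C]\le\frac{m\,m_0}{2n}\qquad\text{and}\qquad \mathrm{Var}[C]\le\frac{(3^c+1)m^2}{n}+\frac{m\,m_0^2}{n^2}.$$ Moreover, for any query key $q\in U\setminus X$ and any bin $z\in[n]$, $\mathbb{E}[C\mid h(q)=z]\le\frac{m\,m_0}{2n}$.
   Context: Simple tabulation hashing: the key universe is $U=[u]$, each key $x\in U$ is viewed as a vector $(x[0],\dots,x[c-1])$ of $c=O(1)$ characters from $\Sigma=[u^{1/c}]$; the range is $[n]=[2^r]$. $h(x)=h_0(x[0])\oplus\cdots\oplus h_{c-1}(x[c-1])$ with $h_0,\dots,h_{c-1}:\Sigma\to[2^r]$ independent fully random functions and $\oplus$ bitwise XOR. *)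

theory Defs
  imports "HOL-Probability.Probability"
begin

text \<open>Keys are vectors of c characters from the alphabet [s] = {0..<s},
  represented as lists of length c.  The range is [2^r].\<close>

definition keys :: "nat \<Rightarrow> nat \<Rightarrow> nat list set" where
  "keys c s = {xs. length xs = c \<and> set xs \<subseteq> {..<s}}"

text \<open>A simple tabulation hash function is given by c tables T 0, ..., T (c-1),
  each a function from [s] to [2^r]; the probability space is the uniform
  distribution over all such table families (independent fully random functions).\<close>

definition tables :: "nat \<Rightarrow> nat \<Rightarrow> nat \<Rightarrow> (nat \<Rightarrow> nat \<Rightarrow> nat) set" where
  "tables c s r = PiE {..<c} (\<lambda>_. PiE {..<s} (\<lambda>_. {..<2^r}))"

definition tab_hash :: "nat \<Rightarrow> (nat \<Rightarrow> nat \<Rightarrow> nat) \<Rightarrow> nat list \<Rightarrow> nat" where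
  "tab_hash c T x = foldr (\<lambda>i acc. xor (T i (x ! i)) acc) [0..<c] 0"

definition tab_space :: "nat \<Rightarrow> nat \<Rightarrow> nat \<Rightarrow> (nat \<Rightarrow> nat \<Rightarrow> nat) pmf" where
  "tab_space c s r = pmf_of_set (tables c s r)"

definition coll_pairs :: "nat \<Rightarrow> (nat \<Rightarrow> nat \<Rightarrow> nat) \<Rightarrow> nat list set \<Rightarrow> nat" where
  "coll_pairs c T A = card {{x, y} | x y. x \<in> A \<and> y \<in> A \<and> x \<noteq> y \<and> tab_hash c T x = tab_hash c T y}"

definition total_coll :: "nat \<Rightarrow> (nat \<Rightarrow> nat \<Rightarrow> nat) \<Rightarrow> nat \<Rightarrow> (nat \<Rightarrow> nat list set) \<Rightarrow> nat" where
  "total_coll c T k G = (\<Sum>i<k. coll_pairs c T (G i))"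

end

theory Submission
  imports Defs
begin

text \<open>For distinct keys \<open>x, y\<close> choose a position \<open>i\<close> and a character \<open>a\<close> that occurs
  there in exactly one of them. XOR-ing the table entry of \<open>a\<close> at position \<open>i\<close> with \<open>d\<close>
  shifts \<open>h x \<oplus> h y\<close> by \<open>d\<close>, so \<open>h x = h y\<close> holds on exactly a \<open>1/n\<close> fraction of every
  family of tables closed under these shifts: all tables, the tables with \<open>h q = z\<close> (taking
  \<open>a \<noteq> q ! i\<close>), and the tables on which a second pair \<open>x', y'\<close> collides, provided \<open>x', y'\<close>
  do not separate \<open>a\<close> at position \<open>i\<close>.

  Now \<open>2 C\<close> is the sum of the collision indicators of the ordered pairs \<open>P\<close> inside the groups,
  so \<open>E[C] = |P| / 2n \<le> m m\<^sub>0 / 2n\<close>, with or without conditioning on \<open>h q = z\<close>. Two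
  of these indicators are independent unless the characters of the quadruple cancel at every
  position, and then their covariance is at most \<open>1/n\<close>. Position by position such a
  dependent quadruple has \<open>x = y, x' = y'\<close> or \<open>x = x', y = y'\<close> or \<open>x = y', y = x'\<close>, and for each
  of the \<open>3\<^sup>c\<close> resulting patterns a Cauchy-Schwarz argument bounds the number of quadruples
  by \<open>m\<^sup>2\<close>. Hence \<open>Var[C] \<le> 3\<^sup>c m\<^sup>2 / 4n\<close>.\<close>

section \<open>Equidistribution under XOR translations\<close>

lemma xor_less_two_power:
  fixes a b :: nat
  assumes "a < 2 ^ r" and "b < 2 ^ r"
  shows "xor a b < 2 ^ r"
proof -
  have "take_bit r a = a" and "take_bit r b = b"
    using assms by (simp_all add: take_bit_nat_eq_self_iff)
  then have "take_bit r (xor a b) = xor a b"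
    by simp
  then show ?thesis
    by (metis take_bit_nat_eq_self_iff)
qed

lemma xor_right_cancel:
  fixes a b d :: "'a::semiring_bit_operations"
  shows "xor a d = xor b d \<longleftrightarrow> a = b"
  by (metis xor.assoc xor.comm_neutral xor_self_eq)

lemma xor_eq_0_iff:
  fixes a b :: "'a::semiring_bit_operations"
  shows "xor a b = 0 \<longleftrightarrow> a = b"
  by (metis xor_right_cancel xor_self_eq)

lemma card_level_set_xor_translation:
  fixes F :: "'a \<Rightarrow> nat" and \<sigma> :: "nat \<Rightarrow> 'a \<Rightarrow> 'a"
  assumes "finite A"
    and F_less: "\<And>a. a \<in> A \<Longrightarrow> F a < 2 ^ r"
    and \<sigma>_closed: "\<And>d a. d < 2 ^ r \<Longrightarrow> a \<in> A \<Longrightarrow> \<sigma> d a \<in> A"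
    and \<sigma>_involution: "\<And>d a. \<sigma> d (\<sigma> d a) = a"
    and F_\<sigma>: "\<And>d a. d < 2 ^ r \<Longrightarrow> a \<in> A \<Longrightarrow> F (\<sigma> d a) = xor (F a) d"
    and "v < 2 ^ r"
  shows "card {a \<in> A. F a = v} * 2 ^ r = card A"
proof -
  have card_le: "card {a \<in> A. F a = u} \<le> card {a \<in> A. F a = w}"
    if "u < 2 ^ r" "w < 2 ^ r" for u w
  proof -
    let ?d = "xor u w"
    have "?d < 2 ^ r"
      using that by (rule xor_less_two_power)
    then have "\<sigma> ?d ` {a \<in> A. F a = u} \<subseteq> {a \<in> A. F a = w}"
      using \<sigma>_closed F_\<sigma> by (auto simp flip: xor.assoc)
    moreover have "inj (\<sigma> ?d)"
      by (metis \<sigma>_involution injI)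
    ultimately show ?thesis
      using \<open>finite A\<close> by (intro card_inj_on_le) (auto intro: inj_on_subset)
  qed
  have "A = (\<Union>w<2 ^ r. {a \<in> A. F a = w})"
    using F_less by auto
  also have "card \<dots> = (\<Sum>w<2 ^ r. card {a \<in> A. F a = w})"
    using \<open>finite A\<close> by (intro card_UN_disjoint) auto
  also have "\<dots> = (\<Sum>w<(2::nat) ^ r. card {a \<in> A. F a = v})"
    using card_le \<open>v < 2 ^ r\<close> by (intro sum.cong refl antisym) auto
  finally show ?thesis
    by simp
qed

section \<open>Counting pairs and quadruples\<close>

lemma card_pairs_fun_eq_sum:
  assumes "finite V" "finite K" "g ` V \<subseteq> K"
  shows "card {(v, w) \<in> V \<times> V. f w = g v} = (\<Sum>k\<in>K. card {v \<in> V. g v = k} * card {w \<in> V. f w = k})"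
proof -
  have "{(v, w) \<in> V \<times> V. f w = g v} = (\<Union>k\<in>K. {v \<in> V. g v = k} \<times> {w \<in> V. f w = k})"
    using assms(3) by auto
  also have "card \<dots> = (\<Sum>k\<in>K. card ({v \<in> V. g v = k} \<times> {w \<in> V. f w = k}))"
    using assms(1,2) by (intro card_UN_disjoint) auto
  finally show ?thesis
    by (simp add: card_cartesian_product)
qed

lemma card_pairs_fun_eq_le:
  assumes "finite V"
  shows "2 * card {(v, w) \<in> V \<times> V. f w = g v}
    \<le> card {(v, w) \<in> V \<times> V. f w = f v} + card {(v, w) \<in> V \<times> V. g w = g v}"
proof -
  define K where "K = f ` V \<union> g ` V"
  define F where "F k = card {w \<in> V. f w = k}" for k
  define G where "G k = card {v \<in> V. g v = k}" for k
  have "finite K"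
    using assms by (simp add: K_def)
  have "2 * G k * F k \<le> F k * F k + G k * G k" for k
  proof -
    have "real (2 * G k * F k) \<le> real (F k * F k + G k * G k)"
      using sum_squares_bound[of "real (G k)" "real (F k)"] by (simp add: power2_eq_square)
    then show ?thesis
      by linarith
  qed
  then have "2 * (\<Sum>k\<in>K. G k * F k) \<le> (\<Sum>k\<in>K. F k * F k) + (\<Sum>k\<in>K. G k * G k)"
    by (simp add: sum_distrib_left mult.assoc flip: sum.distrib) (intro sum_mono; simp add: mult.assoc)
  moreover have "card {(v, w) \<in> V \<times> V. f w = g v} = (\<Sum>k\<in>K. G k * F k)"
    and "card {(v, w) \<in> V \<times> V. f w = f v} = (\<Sum>k\<in>K. F k * F k)"
    and "card {(v, w) \<in> V \<times> V. g w = g v} = (\<Sum>k\<in>K. G k * G k)"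
    unfolding F_def G_def using assms \<open>finite K\<close>
    by (rule card_pairs_fun_eq_sum; auto simp: K_def)+
  ultimately show ?thesis
    by simp
qed

definition pattern_quadruples ::
    "'a list set \<Rightarrow> nat set \<Rightarrow> nat set \<Rightarrow> nat set \<Rightarrow> (('a list \<times> 'a list) \<times> ('a list \<times> 'a list)) set" where
  "pattern_quadruples X E S W = {((x, y), (x', y')) \<in> (X \<times> X) \<times> (X \<times> X).
    (\<forall>i\<in>E. x ! i = y ! i \<and> x' ! i = y' ! i) \<and> (\<forall>i\<in>S. x ! i = x' ! i \<and> y ! i = y' ! i) \<and>
    (\<forall>i\<in>W. x ! i = y' ! i \<and> y ! i = x' ! i)}"

lemma finite_pattern_quadruples: "finite X \<Longrightarrow> finite (pattern_quadruples X E S W)"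
  unfolding pattern_quadruples_def
  by (rule finite_subset[of _ "(X \<times> X) \<times> (X \<times> X)"]) auto

lemma card_pattern_quadruples_empty_le:
  fixes X :: "'a list set"
  assumes "finite X" and len: "\<And>x. x \<in> X \<Longrightarrow> length x = c" and cover: "{..<c} \<subseteq> E \<union> S"
  shows "card (pattern_quadruples X E S {}) \<le> card X ^ 2"
proof -
  let ?Q = "pattern_quadruples X E S {}"
  have determined: "y = map (\<lambda>i. if i \<in> E then x ! i else y' ! i) [0..<c] \<and>
      x' = map (\<lambda>i. if i \<in> E then y' ! i else x ! i) [0..<c]"
    if "((x, y), (x', y')) \<in> ?Q" for x y x' y'
  proof -
    have "\<forall>i<c. (i \<in> E \<longrightarrow> x ! i = y ! i \<and> x' ! i = y' ! i) \<and>
        (i \<notin> E \<longrightarrow> x ! i = x' ! i \<and> y ! i = y' ! i)"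
      using that cover unfolding pattern_quadruples_def by fastforce
    moreover have "length x = c" "length y = c" "length x' = c" "length y' = c"
      using that len unfolding pattern_quadruples_def by auto
    ultimately show ?thesis
      by (auto intro!: nth_equalityI)
  qed
  have "inj_on (\<lambda>((x, y), (x', y')). (x, y')) ?Q"
  proof (rule inj_onI)
    fix p p'
    assume "p \<in> ?Q" "p' \<in> ?Q" and eq: "(\<lambda>((x, y), (x', y')). (x, y')) p = (\<lambda>((x, y), (x', y')). (x, y')) p'"
    obtain x y x' y' u v u' v' where p: "p = ((x, y), (x', y'))" and p': "p' = ((u, v), (u', v'))"
      by (metis prod.collapse)
    have Q: "((x, y), (x', y')) \<in> ?Q" "((u, v), (u', v')) \<in> ?Q"
      using \<open>p \<in> ?Q\<close> \<open>p' \<in> ?Q\<close> unfolding p p' .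
    have "x = u" "y' = v'"
      using eq unfolding p p' by simp_all
    moreover from this have "y = v" "x' = u'"
      using determined[OF Q(1)] determined[OF Q(2)] by simp_all
    ultimately show "p = p'"
      unfolding p p' by simp
  qed
  moreover have "?Q \<subseteq> (X \<times> X) \<times> (X \<times> X)"
    by (auto simp: pattern_quadruples_def)
  ultimately have "card ?Q \<le> card (X \<times> X)"
    using \<open>finite X\<close> by (intro card_inj_on_le) auto
  then show ?thesis
    by (simp add: card_cartesian_product power2_eq_square)
qed

text \<open>Let \<open>f\<close> restrict both keys of a pair to \<open>S \<union> W\<close> and let \<open>g\<close> do the same after
  exchanging their \<open>W\<close>-parts. A quadruple of the pattern satisfies \<open>f (x', y') = g (x, y)\<close>, and
  by \<open>card_pairs_fun_eq_le\<close> there are at most as many of these as quadruples with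
  \<open>f (x', y') = f (x, y)\<close>, i.e. of the pattern \<open>(E, S \<union> W, {})\<close>.\<close>
lemma card_pattern_quadruples_le:
  fixes X :: "'a list set"
  assumes "finite X" and "\<And>x. x \<in> X \<Longrightarrow> length x = c" and "{..<c} \<subseteq> E \<union> S \<union> W"
  shows "card (pattern_quadruples X E S W) \<le> card X ^ 2"
proof -
  define V where "V = {(x, y) \<in> X \<times> X. \<forall>i\<in>E. x ! i = y ! i}"
  define f :: "'a list \<times> 'a list \<Rightarrow> (nat \<Rightarrow> 'a) \<times> (nat \<Rightarrow> 'a)"
    where "f = (\<lambda>(x, y). (\<lambda>i\<in>S \<union> W. x ! i, \<lambda>i\<in>S \<union> W. y ! i))"
  define g :: "'a list \<times> 'a list \<Rightarrow> (nat \<Rightarrow> 'a) \<times> (nat \<Rightarrow> 'a)"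
    where "g = (\<lambda>(x, y). (\<lambda>i\<in>S \<union> W. if i \<in> S then x ! i else y ! i,
                         \<lambda>i\<in>S \<union> W. if i \<in> S then y ! i else x ! i))"
  have restrict_eq_iff: "restrict p A = restrict q A \<longleftrightarrow> (\<forall>i\<in>A. p i = q i)" for p q :: "nat \<Rightarrow> 'a" and A
    by (metis restrict_apply' restrict_ext)
  have g_eq_iff: "g w = g v \<longleftrightarrow> f w = f v" for v w
    unfolding f_def g_def by (simp add: restrict_eq_iff split: prod.split) fastforce
  have "finite V"
    using \<open>finite X\<close> unfolding V_def by (auto intro: finite_subset)
  have "pattern_quadruples X E S W \<subseteq> {(v, w) \<in> V \<times> V. f w = g v}"
    by (auto simp: pattern_quadruples_def V_def f_def g_def restrict_eq_iff)
  then have "card (pattern_quadruples X E S W) \<le> card {(v, w) \<in> V \<times> V. f w = g v}"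
    using \<open>finite V\<close> by (intro card_mono) (auto intro: finite_subset)
  also have "2 * \<dots> \<le> card {(v, w) \<in> V \<times> V. f w = f v} + card {(v, w) \<in> V \<times> V. g w = g v}"
    using \<open>finite V\<close> by (rule card_pairs_fun_eq_le)
  also have "{(v, w) \<in> V \<times> V. g w = g v} = {(v, w) \<in> V \<times> V. f w = f v}"
    using g_eq_iff by simp
  also have "{(v, w) \<in> V \<times> V. f w = f v} = pattern_quadruples X E (S \<union> W) {}"
    by (auto simp: pattern_quadruples_def V_def f_def restrict_eq_iff)
  also have "card \<dots> \<le> card X ^ 2"
    using assms by (intro card_pattern_quadruples_empty_le) auto
  finally show ?thesis
    by simp
qed

lemma indicator_xor_eq_cases:
  assumes "\<And>a. ((x = a) \<noteq> (y = a)) \<longleftrightarrow> ((x' = a) \<noteq> (y' = a))"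
  shows "x = y \<and> x' = y' \<or> x = x' \<and> y = y' \<or> x = y' \<and> y = x'"
  using assms[of x] assms[of y] assms[of x'] by blast

lemma card_unordered_pairs:
  assumes "finite A" and sym: "\<And>x y. R x y \<Longrightarrow> R y x"
  shows "2 * card {{x, y} | x y. x \<in> A \<and> y \<in> A \<and> x \<noteq> y \<and> R x y}
    = card {(x, y) \<in> A \<times> A. x \<noteq> y \<and> R x y}"
proof -
  let ?O = "{(x, y) \<in> A \<times> A. x \<noteq> y \<and> R x y}"
  let ?e = "\<lambda>(x, y). {x, y}"
  have "finite ?O"
    by (rule finite_subset[of _ "A \<times> A"]) (use \<open>finite A\<close> in auto)
  have "card ?O = (\<Sum>p\<in>?O. 1)"
    by simp
  also have "\<dots> = (\<Sum>e\<in>?e ` ?O. \<Sum>p\<in>{p \<in> ?O. ?e p = e}. 1)"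
    using \<open>finite ?O\<close> by (rule sum.image_gen)
  also have "\<dots> = (\<Sum>e\<in>?e ` ?O. 2)"
  proof (rule sum.cong[OF refl])
    fix e assume "e \<in> ?e ` ?O"
    then obtain x y where "x \<in> A" "y \<in> A" "x \<noteq> y" "R x y" and e: "e = {x, y}"
      by auto
    then have "{p \<in> ?O. ?e p = e} = {(x, y), (y, x)}"
      using sym unfolding e by (auto simp: doubleton_eq_iff)
    then show "(\<Sum>p\<in>{p \<in> ?O. ?e p = e}. 1) = 2"
      using \<open>x \<noteq> y\<close> by simp
  qed
  also have "?e ` ?O = {{x, y} | x y. x \<in> A \<and> y \<in> A \<and> x \<noteq> y \<and> R x y}"
    by auto
  finally show ?thesis
    by simp
qed

section \<open>Sums of indicators under a finite distribution\<close>

lemma expectation_sum_indicator: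
  fixes M :: "'a pmf"
  assumes "finite (set_pmf M)" "finite P"
  shows "measure_pmf.expectation M (\<lambda>x. \<Sum>w\<in>P. indicator (A w) x) = (\<Sum>w\<in>P. measure_pmf.prob M (A w))"
  using assms by (simp add: integrable_measure_pmf_finite)

lemma variance_divide:
  fixes M :: "'a pmf" and f :: "'a \<Rightarrow> real"
  shows "measure_pmf.variance M (\<lambda>x. f x / a) = measure_pmf.variance M f / a\<^sup>2"
  by (simp add: diff_divide_distrib[symmetric] power_divide)

lemma variance_sum_indicator:
  fixes M :: "'a pmf"
  assumes "finite (set_pmf M)" "finite P"
  shows "measure_pmf.variance M (\<lambda>x. \<Sum>w\<in>P. indicator (A w) x) =
    (\<Sum>v\<in>P. \<Sum>w\<in>P. measure_pmf.prob M (A v \<inter> A w) - measure_pmf.prob M (A v) * measure_pmf.prob M (A w))"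
proof -
  define S :: "'a \<Rightarrow> real" where "S = (\<lambda>x. \<Sum>w\<in>P. indicator (A w) x)"
  have square: "(S x)\<^sup>2 = (\<Sum>v\<in>P. \<Sum>w\<in>P. indicator (A v \<inter> A w) x)" for x
    by (simp add: S_def power2_eq_square sum_product indicator_inter_arith)
  have "measure_pmf.variance M S =
      measure_pmf.expectation M (\<lambda>x. (S x)\<^sup>2) - (measure_pmf.expectation M S)\<^sup>2"
    by (rule measure_pmf.variance_eq; simp add: integrable_measure_pmf_finite assms)
  moreover have "measure_pmf.expectation M (\<lambda>x. (S x)\<^sup>2) =
      (\<Sum>v\<in>P. \<Sum>w\<in>P. measure_pmf.prob M (A v \<inter> A w))"
    unfolding square using assms by (simp add: integrable_measure_pmf_finite)
  moreover have "(measure_pmf.expectation M S)\<^sup>2 =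
      (\<Sum>v\<in>P. \<Sum>w\<in>P. measure_pmf.prob M (A v) * measure_pmf.prob M (A w))"
    unfolding S_def using assms by (simp add: expectation_sum_indicator power2_eq_square sum_product)
  ultimately have "measure_pmf.variance M S =
      (\<Sum>v\<in>P. \<Sum>w\<in>P. measure_pmf.prob M (A v \<inter> A w) - measure_pmf.prob M (A v) * measure_pmf.prob M (A w))"
    by (simp add: sum_subtractf)
  then show ?thesis
    by (simp only: S_def)
qed

lemma variance_sum_indicator_le:
  fixes M :: "'a pmf" and p :: real
  assumes "finite (set_pmf M)" "finite P"
    and indep: "\<And>v w. v \<in> P \<Longrightarrow> w \<in> P \<Longrightarrow> \<not> D v w \<Longrightarrow>
      measure_pmf.prob M (A v \<inter> A w) = measure_pmf.prob M (A v) * measure_pmf.prob M (A w)"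
    and prob_le: "\<And>v. v \<in> P \<Longrightarrow> measure_pmf.prob M (A v) \<le> p"
  shows "measure_pmf.variance M (\<lambda>x. \<Sum>w\<in>P. indicator (A w) x) \<le> card {(v, w) \<in> P \<times> P. D v w} * p"
proof -
  have "measure_pmf.prob M (A v \<inter> A w) - measure_pmf.prob M (A v) * measure_pmf.prob M (A w)
      \<le> (if D v w then p else 0)" if "v \<in> P" "w \<in> P" for v w
  proof (cases "D v w")
    case True
    have "measure_pmf.prob M (A v \<inter> A w) \<le> measure_pmf.prob M (A v)"
      by (rule measure_pmf.finite_measure_mono) auto
    moreover have "0 \<le> measure_pmf.prob M (A v) * measure_pmf.prob M (A w)"
      by simp
    ultimately have "measure_pmf.prob M (A v \<inter> A w) - measure_pmf.prob M (A v) * measure_pmf.prob M (A w) \<le> p"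
      using prob_le[OF \<open>v \<in> P\<close>] by linarith
    with True show ?thesis
      by simp
  qed (simp add: indep that)
  then have "measure_pmf.variance M (\<lambda>x. \<Sum>w\<in>P. indicator (A w) x) \<le>
      (\<Sum>v\<in>P. \<Sum>w\<in>P. if D v w then p else 0)"
    using assms(1,2) by (simp add: variance_sum_indicator sum_mono)
  also have "\<dots> = (\<Sum>u\<in>P \<times> P. if D (fst u) (snd u) then p else 0)"
    by (simp add: sum.cartesian_product case_prod_beta)
  also have "\<dots> = card (P \<times> P \<inter> {u. D (fst u) (snd u)}) * p"
    using \<open>finite P\<close> by (simp add: sum.If_cases)
  also have "P \<times> P \<inter> {u. D (fst u) (snd u)} = {(v, w) \<in> P \<times> P. D v w}"
    by auto
  finally show ?thesis .
qed

lemma prob_pmf_of_set_eq_inverse: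
  assumes "finite B" "B \<noteq> {}" "card (B \<inter> E) * n = card B"
  shows "measure_pmf.prob (pmf_of_set B) E = 1 / n"
proof -
  have "card B > 0"
    using assms by (simp add: card_gt_0_iff)
  with assms(3) have "n > 0" "card (B \<inter> E) > 0"
    by (metis gr0I mult_0_right, metis gr0I mult_0)
  have "real (card B) = real (card (B \<inter> E)) * real n"
    using assms(3) by (metis of_nat_mult)
  have "measure_pmf.prob (pmf_of_set B) E = card (B \<inter> E) / card B"
    by (rule measure_pmf_of_set[OF assms(2,1)])
  also have "\<dots> = 1 / n"
    using \<open>n > 0\<close> \<open>card (B \<inter> E) > 0\<close> \<open>real (card B) = _\<close> by (simp add: field_simps)
  finally show ?thesis .
qed

section \<open>Tabulation hashing\<close>

lemma finite_tables: "finite (tables c s r)"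
  unfolding tables_def by (intro finite_PiE) auto

lemma card_tables_pos: "card (tables c s r) > 0"
  unfolding tables_def by (simp add: card_PiE)

lemma tables_nonempty: "tables c s r \<noteq> {}"
  using card_tables_pos[of c s r] by auto

lemma finite_keys: "finite (keys c s)"
proof -
  have "keys c s = {xs. set xs \<subseteq> {..<s} \<and> length xs = c}"
    unfolding keys_def by auto
  then show ?thesis
    by (simp add: finite_lists_length_eq)
qed

lemma keys_eqI:
  assumes "x \<in> keys c s" "y \<in> keys c s" "\<And>i. i < c \<Longrightarrow> x ! i = y ! i"
  shows "x = y"
  using assms unfolding keys_def by (auto intro: nth_equalityI)

definition tab_flip :: "nat \<Rightarrow> nat \<Rightarrow> nat \<Rightarrow> (nat \<Rightarrow> nat \<Rightarrow> nat) \<Rightarrow> nat \<Rightarrow> nat \<Rightarrow> nat" where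
  "tab_flip i a d T = T(i := (T i)(a := xor (T i a) d))"

lemma tab_flip_tab_flip [simp]: "tab_flip i a d (tab_flip i a d T) = T"
  by (simp add: tab_flip_def xor.assoc fun_eq_iff)

lemma tab_flip_in_tables:
  assumes "T \<in> tables c s r" "i < c" "a < s" "d < 2 ^ r"
  shows "tab_flip i a d T \<in> tables c s r"
proof -
  have "T i a < 2 ^ r"
    using assms unfolding tables_def by (auto simp: PiE_iff)
  then have "xor (T i a) d < 2 ^ r"
    using \<open>d < 2 ^ r\<close> by (rule xor_less_two_power)
  then show ?thesis
    using assms unfolding tables_def tab_flip_def by (auto simp: PiE_iff extensional_def)
qed

lemma foldr_xor_tab_flip:
  assumes "distinct L"
  shows "foldr (\<lambda>j acc. xor (tab_flip i a d T j (x ! j)) acc) L 0 =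
         xor (foldr (\<lambda>j acc. xor (T j (x ! j)) acc) L 0) (if i \<in> set L \<and> x ! i = a then d else 0)"
  using assms by (induction L) (auto simp: tab_flip_def xor.assoc xor.left_commute xor.commute)

lemma tab_hash_tab_flip:
  "tab_hash c (tab_flip i a d T) x = xor (tab_hash c T x) (if i < c \<and> x ! i = a then d else 0)"
  unfolding tab_hash_def by (subst foldr_xor_tab_flip) auto

lemma nth_key_less: "x \<in> keys c s \<Longrightarrow> i < c \<Longrightarrow> x ! i < s"
  unfolding keys_def by (auto intro!: subsetD[of "set x"] nth_mem)

lemma tab_hash_less:
  assumes "T \<in> tables c s r" "x \<in> keys c s"
  shows "tab_hash c T x < 2 ^ r"
proof -
  have "foldr (\<lambda>j acc. xor (T j (x ! j)) acc) L 0 < 2 ^ r" if "set L \<subseteq> {..<c}" for L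
    using that
  proof (induction L)
    case (Cons j L)
    then have "T j (x ! j) < 2 ^ r"
      using assms nth_key_less unfolding tables_def by (fastforce simp: PiE_iff)
    with Cons show ?case
      by (auto intro: xor_less_two_power)
  qed simp
  from this[of "[0..<c]"] show ?thesis
    unfolding tab_hash_def by (simp add: atLeast0LessThan)
qed

definition collision :: "nat \<Rightarrow> nat list \<times> nat list \<Rightarrow> (nat \<Rightarrow> nat \<Rightarrow> nat) set" where
  "collision c w = {T. tab_hash c T (fst w) = tab_hash c T (snd w)}"

definition flip_closed :: "nat \<Rightarrow> nat \<Rightarrow> nat \<Rightarrow> (nat \<Rightarrow> nat \<Rightarrow> nat) set \<Rightarrow> bool" where
  "flip_closed r i a B \<longleftrightarrow> (\<forall>d < 2 ^ r. \<forall>T \<in> B. tab_flip i a d T \<in> B)"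

lemma flip_closed_tables: "i < c \<Longrightarrow> a < s \<Longrightarrow> flip_closed r i a (tables c s r)"
  unfolding flip_closed_def by (auto intro: tab_flip_in_tables)

lemma flip_closed_Int:
  assumes "flip_closed r i a B" and "\<And>d T. tab_flip i a d T \<in> E \<longleftrightarrow> T \<in> E"
  shows "flip_closed r i a (B \<inter> E)"
  using assms unfolding flip_closed_def by auto

lemma tab_flip_in_collision_iff:
  assumes "(x ! i = a) \<longleftrightarrow> (y ! i = a)"
  shows "tab_flip i a d T \<in> collision c (x, y) \<longleftrightarrow> T \<in> collision c (x, y)"
  using assms by (simp add: collision_def tab_hash_tab_flip xor_right_cancel)

lemma card_collision_flip_closed:
  assumes "B \<subseteq> tables c s r" "flip_closed r i a B"
    and "x \<in> keys c s" "y \<in> keys c s" "i < c" "(x ! i = a) \<noteq> (y ! i = a)"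
  shows "card (B \<inter> collision c (x, y)) * 2 ^ r = card B"
proof -
  let ?F = "\<lambda>T. xor (tab_hash c T x) (tab_hash c T y)"
  have "card {T \<in> B. ?F T = 0} * 2 ^ r = card B"
  proof (rule card_level_set_xor_translation[where \<sigma> = "\<lambda>d. tab_flip i a d"])
    show "finite B"
      using assms(1) finite_tables by (rule finite_subset)
    show "?F T < 2 ^ r" if "T \<in> B" for T
      using that assms by (auto intro: xor_less_two_power tab_hash_less)
    show "?F (tab_flip i a d T) = xor (?F T) d" for d T
      using assms(5,6) by (cases "x ! i = a") (auto simp: tab_hash_tab_flip ac_simps)
  qed (use assms(2) in \<open>auto simp: flip_closed_def\<close>)
  moreover have "{T \<in> B. ?F T = 0} = B \<inter> collision c (x, y)"
    by (auto simp: collision_def xor_eq_0_iff)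
  ultimately show ?thesis
    by simp
qed

lemma card_collision:
  assumes "x \<in> keys c s" "y \<in> keys c s" "x \<noteq> y"
  shows "card (tables c s r \<inter> collision c (x, y)) * 2 ^ r = card (tables c s r)"
proof -
  obtain i where "i < c" "x ! i \<noteq> y ! i"
    using keys_eqI[OF assms(1,2)] assms(3) by blast
  then show ?thesis
    using assms by (intro card_collision_flip_closed[where i = i and a = "x ! i"])
      (auto intro: flip_closed_tables nth_key_less)
qed

lemma card_tab_hash_eq:
  assumes "q \<in> keys c s" "0 < c" "z < 2 ^ r"
  shows "card {T \<in> tables c s r. tab_hash c T q = z} * 2 ^ r = card (tables c s r)"
proof (rule card_level_set_xor_translation[where \<sigma> = "\<lambda>d. tab_flip 0 (q ! 0) d"])
  have "flip_closed r 0 (q ! 0) (tables c s r)"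
    using assms by (intro flip_closed_tables nth_key_less)
  then show "tab_flip 0 (q ! 0) d T \<in> tables c s r" if "d < 2 ^ r" "T \<in> tables c s r" for d T
    using that by (simp add: flip_closed_def)
  show "tab_hash c (tab_flip 0 (q ! 0) d T) q = xor (tab_hash c T q) d" for d T
    using assms by (simp add: tab_hash_tab_flip)
qed (use assms in \<open>simp_all add: finite_tables tab_hash_less\<close>)

lemma card_collision_given_hash:
  assumes "q \<in> keys c s" "x \<in> keys c s" "y \<in> keys c s" "x \<noteq> y"
  shows "card ({T \<in> tables c s r. tab_hash c T q = z} \<inter> collision c (x, y)) * 2 ^ r
    = card {T \<in> tables c s r. tab_hash c T q = z}"
    (is "card (?B \<inter> _) * _ = card ?B")
proof -
  obtain i where i: "i < c" "x ! i \<noteq> y ! i"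
    using keys_eqI[OF assms(2,3)] assms(4) by blast
  define a where "a = (if q ! i = x ! i then y ! i else x ! i)"
  have a: "a < s" "q ! i \<noteq> a" "(x ! i = a) \<noteq> (y ! i = a)"
    using i assms by (auto simp: a_def nth_key_less)
  have "flip_closed r i a (tables c s r \<inter> {T. tab_hash c T q = z})"
    using i a by (intro flip_closed_Int flip_closed_tables) (auto simp: tab_hash_tab_flip)
  then have "flip_closed r i a ?B"
    by (simp add: Collect_conj_eq)
  with i a assms show ?thesis
    by (intro card_collision_flip_closed) auto
qed

text \<open>\<open>tab_dependent c (x, y) (x', y')\<close>: at each position the characters of \<open>x, y\<close> and of
  \<open>x', y'\<close> cancel alike, i.e. \<open>h x \<oplus> h y \<oplus> h x' \<oplus> h y' = 0\<close> for every table.\<close>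
definition tab_dependent :: "nat \<Rightarrow> nat list \<times> nat list \<Rightarrow> nat list \<times> nat list \<Rightarrow> bool" where
  "tab_dependent c v w \<longleftrightarrow>
    (\<forall>i<c. \<forall>a. ((fst v ! i = a) \<noteq> (snd v ! i = a)) \<longleftrightarrow> ((fst w ! i = a) \<noteq> (snd w ! i = a)))"

lemma card_collision_Int_collision:
  assumes keys: "x \<in> keys c s" "y \<in> keys c s" "x' \<in> keys c s" "y' \<in> keys c s"
    and "x \<noteq> y" "x' \<noteq> y'" and "\<not> tab_dependent c (x, y) (x', y')"
  shows "card (tables c s r \<inter> collision c (x, y) \<inter> collision c (x', y')) * 2 ^ r * 2 ^ r
    = card (tables c s r)"
proof -
  have one_separated: "card (tables c s r \<inter> collision c (u', v') \<inter> collision c (u, v)) * 2 ^ r * 2 ^ r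
      = card (tables c s r)"
    if "u \<in> keys c s" "v \<in> keys c s" "u' \<in> keys c s" "v' \<in> keys c s" "u' \<noteq> v'" "i < c"
      "(u ! i = a) \<noteq> (v ! i = a)" "(u' ! i = a) \<longleftrightarrow> (v' ! i = a)" for u v u' v' i a
  proof -
    have "a < s"
      using that by (metis nth_key_less)
    then have "flip_closed r i a (tables c s r \<inter> collision c (u', v'))"
      using that by (intro flip_closed_Int flip_closed_tables tab_flip_in_collision_iff)
    then have "card (tables c s r \<inter> collision c (u', v') \<inter> collision c (u, v)) * 2 ^ r
        = card (tables c s r \<inter> collision c (u', v'))"
      using that by (intro card_collision_flip_closed) auto
    with card_collision[OF that(3-5)] show ?thesis
      by simp
  qed
  obtain i a where "i < c" and
    "((x ! i = a) \<noteq> (y ! i = a)) \<noteq> ((x' ! i = a) \<noteq> (y' ! i = a))"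
    using assms(7) unfolding tab_dependent_def by auto
  then consider
      "(x ! i = a) \<noteq> (y ! i = a)" "(x' ! i = a) \<longleftrightarrow> (y' ! i = a)"
    | "(x' ! i = a) \<noteq> (y' ! i = a)" "(x ! i = a) \<longleftrightarrow> (y ! i = a)"
    by blast
  then show ?thesis
  proof cases
    case 1
    then show ?thesis
      using one_separated[OF keys \<open>x' \<noteq> y'\<close> \<open>i < c\<close>] by (simp add: Int_ac)
  next
    case 2
    then show ?thesis
      using one_separated[OF keys(3,4,1,2) \<open>x \<noteq> y\<close> \<open>i < c\<close>] by (simp add: Int_ac)
  qed
qed

lemma tab_dependent_in_pattern_quadruples:
  assumes "x \<in> X" "y \<in> X" "x' \<in> X" "y' \<in> X" and dep: "tab_dependent c (x, y) (x', y')"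
  obtains \<pi> :: "nat \<Rightarrow> nat" where "\<pi> \<in> {..<c} \<rightarrow>\<^sub>E {..<3}"
    and "((x, y), (x', y')) \<in> pattern_quadruples X
      {i. i < c \<and> \<pi> i = 0} {i. i < c \<and> \<pi> i = 1} {i. i < c \<and> \<pi> i = 2}"
proof -
  define \<pi> where "\<pi> = (\<lambda>i\<in>{..<c}. if x ! i = y ! i \<and> x' ! i = y' ! i then 0
    else if x ! i = x' ! i \<and> y ! i = y' ! i then 1 else 2 :: nat)"
  have "\<pi> \<in> {..<c} \<rightarrow>\<^sub>E {..<3}"
    by (auto simp: \<pi>_def)
  moreover have "x ! i = y' ! i \<and> y ! i = x' ! i" if "i < c" "\<pi> i = 2" for i
    using that dep indicator_xor_eq_cases[of "x ! i" "y ! i" "x' ! i" "y' ! i"]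
    by (auto simp: \<pi>_def tab_dependent_def split: if_splits)
  then have "((x, y), (x', y')) \<in> pattern_quadruples X
      {i. i < c \<and> \<pi> i = 0} {i. i < c \<and> \<pi> i = 1} {i. i < c \<and> \<pi> i = 2}"
    using assms(1-4) by (auto simp: pattern_quadruples_def \<pi>_def split: if_splits)
  ultimately show ?thesis
    by (rule that)
qed

lemma card_tab_dependent_le:
  assumes "finite X" "X \<subseteq> keys c s"
  shows "card {(v, w) \<in> (X \<times> X) \<times> (X \<times> X). tab_dependent c v w} \<le> 3 ^ c * card X ^ 2"
proof -
  let ?patterns = "{..<c} \<rightarrow>\<^sub>E {..<3::nat}"
  let ?Q = "\<lambda>\<pi>. pattern_quadruples X {i. i < c \<and> \<pi> i = 0} {i. i < c \<and> \<pi> i = 1} {i. i < c \<and> \<pi> i = 2}"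
  have "{(v, w) \<in> (X \<times> X) \<times> (X \<times> X). tab_dependent c v w} \<subseteq> (\<Union>\<pi>\<in>?patterns. ?Q \<pi>)"
    by (clarify, erule (4) tab_dependent_in_pattern_quadruples) blast
  then have "card {(v, w) \<in> (X \<times> X) \<times> (X \<times> X). tab_dependent c v w} \<le> card (\<Union>\<pi>\<in>?patterns. ?Q \<pi>)"
    using \<open>finite X\<close> by (intro card_mono finite_UN_I finite_PiE finite_pattern_quadruples) auto
  also have "\<dots> \<le> (\<Sum>\<pi>\<in>?patterns. card (?Q \<pi>))"
    by (rule card_UN_le) (simp add: finite_PiE)
  also have "\<dots> \<le> (\<Sum>\<pi>\<in>?patterns. card X ^ 2)"
  proof (rule sum_mono)
    fix \<pi> assume "\<pi> \<in> ?patterns"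
    then have "\<pi> i < 3" if "i < c" for i
      using that by (auto simp: PiE_iff)
    then have "\<pi> i = 0 \<or> \<pi> i = 1 \<or> \<pi> i = 2" if "i < c" for i
      using that by fastforce
    then have "{..<c} \<subseteq> {i. i < c \<and> \<pi> i = 0} \<union> {i. i < c \<and> \<pi> i = 1} \<union> {i. i < c \<and> \<pi> i = 2}"
      by blast
    moreover have "x \<in> X \<Longrightarrow> length x = c" for x
      using assms(2) by (auto simp: keys_def)
    ultimately show "card (?Q \<pi>) \<le> card X ^ 2"
      using \<open>finite X\<close> by (intro card_pattern_quadruples_le)
  qed
  also have "\<dots> = 3 ^ c * card X ^ 2"
    by (simp add: card_PiE)
  finally show ?thesis .
qed

lemma prob_collision:
  assumes "x \<in> keys c s" "y \<in> keys c s" "x \<noteq> y"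
  shows "measure_pmf.prob (tab_space c s r) (collision c (x, y)) = 1 / 2 ^ r"
proof -
  have "tables c s r \<noteq> {}"
    by (rule tables_nonempty)
  then have "measure_pmf.prob (tab_space c s r) (collision c (x, y)) = 1 / real (2 ^ r)"
    unfolding tab_space_def using assms by (intro prob_pmf_of_set_eq_inverse finite_tables card_collision)
  then show ?thesis
    by simp
qed

lemma tab_hash_eq_nonempty:
  assumes "q \<in> keys c s" "0 < c" "z < 2 ^ r"
  shows "{T \<in> tables c s r. tab_hash c T q = z} \<noteq> {}"
proof -
  have "card {T \<in> tables c s r. tab_hash c T q = z} \<noteq> 0"
    using card_tab_hash_eq[OF assms] card_tables_pos[of c s r] by (metis mult_0 neq0_conv)
  then show ?thesis
    by (metis card.empty)
qed

lemma prob_collision_given_hash: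
  assumes "q \<in> keys c s" "0 < c" "z < 2 ^ r" "x \<in> keys c s" "y \<in> keys c s" "x \<noteq> y"
  shows "measure_pmf.prob (pmf_of_set {T \<in> tables c s r. tab_hash c T q = z}) (collision c (x, y))
    = 1 / 2 ^ r"
proof -
  have "{T \<in> tables c s r. tab_hash c T q = z} \<noteq> {}"
    using assms(1-3) by (rule tab_hash_eq_nonempty)
  then have "measure_pmf.prob (pmf_of_set {T \<in> tables c s r. tab_hash c T q = z}) (collision c (x, y))
      = 1 / real (2 ^ r)"
    using assms by (intro prob_pmf_of_set_eq_inverse card_collision_given_hash) (auto simp: finite_tables)
  then show ?thesis
    by simp
qed

lemma prob_collision_Int_collision:
  assumes "x \<in> keys c s" "y \<in> keys c s" "x' \<in> keys c s" "y' \<in> keys c s"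
    and "x \<noteq> y" "x' \<noteq> y'" and "\<not> tab_dependent c (x, y) (x', y')"
  shows "measure_pmf.prob (tab_space c s r) (collision c (x, y) \<inter> collision c (x', y'))
    = measure_pmf.prob (tab_space c s r) (collision c (x, y)) *
      measure_pmf.prob (tab_space c s r) (collision c (x', y'))"
proof -
  have "tables c s r \<noteq> {}"
    by (rule tables_nonempty)
  moreover have "card (tables c s r \<inter> (collision c (x, y) \<inter> collision c (x', y'))) * (2 ^ r * 2 ^ r)
      = card (tables c s r)"
    using card_collision_Int_collision[OF assms] by (simp add: Int_assoc mult.assoc)
  ultimately have "measure_pmf.prob (tab_space c s r) (collision c (x, y) \<inter> collision c (x', y'))
      = 1 / real (2 ^ r * 2 ^ r)"
    unfolding tab_space_def by (intro prob_pmf_of_set_eq_inverse finite_tables)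
  then show ?thesis
    using assms by (simp add: prob_collision)
qed

section \<open>Collisions inside the groups\<close>

definition group_pairs :: "nat \<Rightarrow> (nat \<Rightarrow> 'a set) \<Rightarrow> ('a \<times> 'a) set" where
  "group_pairs k G = {(x, y). \<exists>i<k. x \<in> G i \<and> y \<in> G i \<and> x \<noteq> y}"

lemma finite_group_pairs:
  assumes "\<And>i. i < k \<Longrightarrow> finite (G i)"
  shows "finite (group_pairs k G)"
proof (rule finite_subset)
  show "group_pairs k G \<subseteq> (\<Union>i<k. G i \<times> G i)"
    by (auto simp: group_pairs_def)
qed (use assms in auto)

lemma group_pairs_keys:
  assumes "\<And>i. i < k \<Longrightarrow> G i \<subseteq> keys c s" and "w \<in> group_pairs k G"
  shows "fst w \<in> keys c s" "snd w \<in> keys c s" "fst w \<noteq> snd w"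
  using assms by (fastforce simp: group_pairs_def)+

lemma total_coll_eq_sum_indicator:
  assumes groups_finite: "\<And>i. i < k \<Longrightarrow> finite (G i)"
    and disjoint: "\<And>i j. i < k \<Longrightarrow> j < k \<Longrightarrow> i \<noteq> j \<Longrightarrow> G i \<inter> G j = {}"
  shows "real (total_coll c T k G) = (\<Sum>w\<in>group_pairs k G. indicator (collision c w) T) / 2"
proof -
  let ?O = "\<lambda>i. {(x, y) \<in> G i \<times> G i. x \<noteq> y \<and> tab_hash c T x = tab_hash c T y}"
  have finite_O: "finite (?O i)" if "i < k" for i
    by (rule finite_subset[of _ "G i \<times> G i"]) (use groups_finite that in auto)
  have "2 * total_coll c T k G = (\<Sum>i<k. card (?O i))"
    unfolding total_coll_def coll_pairs_def sum_distrib_left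
    by (intro sum.cong refl card_unordered_pairs groups_finite) auto
  also have "\<dots> = card (\<Union>i<k. ?O i)"
    using finite_O disjoint by (intro card_UN_disjoint[symmetric]) blast+
  also have "(\<Union>i<k. ?O i) = group_pairs k G \<inter> {w. T \<in> collision c w}"
    by (auto simp: group_pairs_def collision_def)
  finally have "2 * total_coll c T k G = card (group_pairs k G \<inter> {w. T \<in> collision c w})" .
  moreover have "(\<Sum>w\<in>group_pairs k G. indicator (collision c w) T)
      = real (card (group_pairs k G \<inter> {w. T \<in> collision c w}))"
    using finite_group_pairs[of k G, OF groups_finite] by (simp add: indicator_def sum_of_bool_eq)
  ultimately show ?thesis
    by simp
qed

lemma card_group_pairs_le:
  assumes groups_finite: "\<And>i. i < k \<Longrightarrow> finite (G i)"
    and disjoint: "\<And>i j. i < k \<Longrightarrow> j < k \<Longrightarrow> i \<noteq> j \<Longrightarrow> G i \<inter> G j = {}"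
    and "\<And>i. i < k \<Longrightarrow> card (G i) \<le> m0"
  shows "card (group_pairs k G) \<le> card (\<Union>i<k. G i) * m0"
proof -
  have "card (group_pairs k G) \<le> card (\<Union>i<k. G i \<times> G i)"
    using groups_finite by (intro card_mono) (auto simp: group_pairs_def)
  also have "\<dots> \<le> (\<Sum>i<k. card (G i \<times> G i))"
    by (rule card_UN_le) simp
  also have "\<dots> \<le> (\<Sum>i<k. card (G i) * m0)"
    using assms(3) by (intro sum_mono) (simp add: card_cartesian_product)
  also have "\<dots> = card (\<Union>i<k. G i) * m0"
    using groups_finite disjoint by (simp add: sum_distrib_right card_UN_disjoint)
  finally show ?thesis .
qed

lemma expectation_total_coll:
  fixes M :: "(nat \<Rightarrow> nat \<Rightarrow> nat) pmf"
  assumes "finite (set_pmf M)"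
    and groups_keys: "\<And>i. i < k \<Longrightarrow> G i \<subseteq> keys c s"
    and disjoint: "\<And>i j. i < k \<Longrightarrow> j < k \<Longrightarrow> i \<noteq> j \<Longrightarrow> G i \<inter> G j = {}"
    and collision_prob: "\<And>x y. x \<in> keys c s \<Longrightarrow> y \<in> keys c s \<Longrightarrow> x \<noteq> y \<Longrightarrow>
      measure_pmf.prob M (collision c (x, y)) = 1 / 2 ^ r"
  shows "measure_pmf.expectation M (\<lambda>T. real (total_coll c T k G)) = card (group_pairs k G) / (2 * 2 ^ r)"
proof -
  have groups_finite: "finite (G i)" if "i < k" for i
    using groups_keys[OF that] finite_keys by (rule finite_subset)
  have "measure_pmf.prob M (collision c w) = 1 / 2 ^ r" if "w \<in> group_pairs k G" for w
    using collision_prob[OF group_pairs_keys[of k G c s, OF groups_keys that]] by simp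
  then show ?thesis
    using assms(1) finite_group_pairs[of k G, OF groups_finite]
    by (simp add: total_coll_eq_sum_indicator[of k G, OF groups_finite disjoint] expectation_sum_indicator)
qed

lemma variance_total_coll_le:
  assumes groups_keys: "\<And>i. i < k \<Longrightarrow> G i \<subseteq> keys c s"
    and disjoint: "\<And>i j. i < k \<Longrightarrow> j < k \<Longrightarrow> i \<noteq> j \<Longrightarrow> G i \<inter> G j = {}"
  shows "measure_pmf.variance (tab_space c s r) (\<lambda>T. real (total_coll c T k G))
    \<le> 3 ^ c * real (card (\<Union>i<k. G i)) ^ 2 / (4 * 2 ^ r)"
proof -
  define X where "X = (\<Union>i<k. G i)"
  define P where "P = group_pairs k G"
  define S :: "(nat \<Rightarrow> nat \<Rightarrow> nat) \<Rightarrow> real" where "S = (\<lambda>T. \<Sum>w\<in>P. indicator (collision c w) T)"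
  have groups_finite: "finite (G i)" if "i < k" for i
    using groups_keys[OF that] finite_keys by (rule finite_subset)
  have "X \<subseteq> keys c s"
    using groups_keys by (auto simp: X_def)
  then have "finite X"
    using finite_keys by (rule finite_subset)
  have P_sub: "P \<subseteq> X \<times> X"
    by (auto simp: P_def X_def group_pairs_def)
  have pair_keys: "fst w \<in> keys c s" "snd w \<in> keys c s" "fst w \<noteq> snd w" if "w \<in> P" for w
    using group_pairs_keys[of k G c s w, OF groups_keys] that unfolding P_def by auto
  have "measure_pmf.variance (tab_space c s r) S \<le> card {(v, w) \<in> P \<times> P. tab_dependent c v w} * (1 / 2 ^ r)"
    unfolding S_def
  proof (rule variance_sum_indicator_le)
    show "finite (set_pmf (tab_space c s r))"
      by (simp add: tab_space_def finite_tables tables_nonempty)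
    show "finite P"
      unfolding P_def using groups_finite by (rule finite_group_pairs)
    show "measure_pmf.prob (tab_space c s r) (collision c v \<inter> collision c w)
        = measure_pmf.prob (tab_space c s r) (collision c v) * measure_pmf.prob (tab_space c s r) (collision c w)"
      if "v \<in> P" "w \<in> P" "\<not> tab_dependent c v w" for v w
      using that pair_keys[OF \<open>v \<in> P\<close>] pair_keys[OF \<open>w \<in> P\<close>]
        prob_collision_Int_collision[of "fst v" c s "snd v" "fst w" "snd w" r] by simp
    show "measure_pmf.prob (tab_space c s r) (collision c v) \<le> 1 / 2 ^ r" if "v \<in> P" for v
      using pair_keys[OF that] prob_collision[of "fst v" c s "snd v" r] by simp
  qed
  also have "card {(v, w) \<in> P \<times> P. tab_dependent c v w}
      \<le> card {(v, w) \<in> (X \<times> X) \<times> (X \<times> X). tab_dependent c v w}"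
    using P_sub \<open>finite X\<close> by (intro card_mono) (auto intro: finite_subset[of _ "(X \<times> X) \<times> (X \<times> X)"])
  also have "\<dots> \<le> 3 ^ c * card X ^ 2"
    using \<open>finite X\<close> \<open>X \<subseteq> keys c s\<close> by (rule card_tab_dependent_le)
  finally have "measure_pmf.variance (tab_space c s r) S \<le> 3 ^ c * real (card X) ^ 2 * (1 / 2 ^ r)"
    by (simp add: divide_right_mono)
  moreover have "real (total_coll c T k G) = S T / 2" for T
    unfolding P_def S_def using groups_finite disjoint by (rule total_coll_eq_sum_indicator)
  ultimately show ?thesis
    by (simp only: variance_divide flip: X_def) (simp add: field_simps)
qed

theorem lemma5:
  fixes c s r k m0 :: nat and X :: "nat list set" and G :: "nat \<Rightarrow> nat list set"
    and q :: "nat list" and z :: nat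
  assumes c_pos: "c \<ge> 1"
    and X_sub: "X \<subseteq> keys c s"
    and G_union: "(\<Union>i<k. G i) = X"
    and G_disj: "\<And>i j. i < k \<Longrightarrow> j < k \<Longrightarrow> i \<noteq> j \<Longrightarrow> G i \<inter> G j = {}"
    and m0_pos: "m0 \<ge> 1"
    and G_size: "\<And>i. i < k \<Longrightarrow> card (G i) \<le> m0"
    and q_key: "q \<in> keys c s - X"
    and z_bin: "z < 2 ^ r"
  shows "(measure_pmf.expectation (tab_space c s r) (\<lambda>T. real (total_coll c T k G))
           \<le> real (card X) * real m0 / (2 * 2 ^ r)) \<and>
         (measure_pmf.variance (tab_space c s r) (\<lambda>T. real (total_coll c T k G))
           \<le> (3 ^ c + 1) * real (card X) ^ 2 / 2 ^ r + real (card X) * real m0 ^ 2 / (2 ^ r) ^ 2) \<and>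
         (measure_pmf.expectation
           (pmf_of_set {T \<in> tables c s r. tab_hash c T q = z}) (\<lambda>T. real (total_coll c T k G))
           \<le> real (card X) * real m0 / (2 * 2 ^ r))"
proof -
  have groups_keys: "G i \<subseteq> keys c s" if "i < k" for i
    using that G_union X_sub by blast
  have q: "q \<in> keys c s" "0 < c"
    using q_key c_pos by auto
  have "card (group_pairs k G) \<le> card X * m0"
    unfolding G_union[symmetric] using finite_subset[OF groups_keys finite_keys] G_disj G_size
    by (rule card_group_pairs_le)
  then have mean_bound: "real (card (group_pairs k G)) / (2 * 2 ^ r) \<le> real (card X) * real m0 / (2 * 2 ^ r)"
    by (intro divide_right_mono) (simp_all flip: of_nat_mult)
  have "measure_pmf.expectation (tab_space c s r) (\<lambda>T. real (total_coll c T k G))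
      = card (group_pairs k G) / (2 * 2 ^ r)"
    using groups_keys G_disj prob_collision
    by (intro expectation_total_coll) (simp_all add: tab_space_def finite_tables tables_nonempty)
  moreover have "measure_pmf.expectation (pmf_of_set {T \<in> tables c s r. tab_hash c T q = z})
      (\<lambda>T. real (total_coll c T k G)) = card (group_pairs k G) / (2 * 2 ^ r)"
    using groups_keys G_disj prob_collision_given_hash[OF q z_bin] tab_hash_eq_nonempty[OF q z_bin]
    by (intro expectation_total_coll) (simp_all add: finite_tables)
  moreover have "3 ^ c * real (card X) ^ 2 / (4 * 2 ^ r)
      \<le> (3 ^ c + 1) * real (card X) ^ 2 / 2 ^ r + real (card X) * real m0 ^ 2 / (2 ^ r) ^ 2"
    by (simp add: field_simps add_increasing)
  ultimately show ?thesis
    using mean_bound variance_total_coll_le[of k G c s r, OF groups_keys G_disj] G_union by auto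
qed

end
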